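(* Let $r\ge1$ and let $P:\{0,1\}^r\to\{0,1\}$ be a predicate with an affine projection to AND. Then there is a constant $c_r>0$ such that for every $\varepsilon\in[0,1)$ and every $k\ge 4r+2$, there exists an instance of CSP$(P)$ on $k$ Boolean variables for which every $(1\pm\varepsilon)$-sparsifier uses at least $c_r k^2$ constraints.
   Context: A predicate $P:\{0,1\}^r\to\{0,1\}$ has an affine projection to AND if there exists $\pi:[r]\to\{0,1,x,\neg x,y,\neg y\}$ such that $\mathrm{AND}(x,y)=P(\pi(1),\dots,\pi(r))$ for all $x,y\in\{0,1\}$. An instance of CSP$(P)$ on Boolean variables $x_1,\dots,x_k$ is a list of constraints $C_j=P(x_{j,1},\dots,x_{j,r})$, $j\in[m]$; its value on $x\in\{0,1\}^k$ is $\sum_jC_j(x)$. A $(1\pm\varepsilon)$-sparsifier is a subset $T\subseteq[m]$ with nonnegative weights $(w_j)_{j\in T}$ such that for every $x\in\{0,1\}^k$, $(1-\varepsilon)\sum_{j=1}^mC_j(x)\le\sum_{j\in T}w_jC_j(x)\le(1+\varepsilon)\sum_{j=1}^mC_j(x)$. *)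

theory Defs
  imports Complex_Main
begin

datatype proj_lit = PZero | POne | PX | PNotX | PY | PNotY

fun eval_proj_lit :: "proj_lit \<Rightarrow> bool \<Rightarrow> bool \<Rightarrow> bool" where
  "eval_proj_lit PZero x y = False"
| "eval_proj_lit POne x y = True"
| "eval_proj_lit PX x y = x"
| "eval_proj_lit PNotX x y = (\<not> x)"
| "eval_proj_lit PY x y = y"
| "eval_proj_lit PNotY x y = (\<not> y)"

text \<open>A predicate of arity r is a function on Boolean lists (only lists of length r matter).
  It has an affine projection to AND if some pi : [r] -> {0,1,x,~x,y,~y} gives
  AND(x,y) = P(pi(1),...,pi(r)).\<close>
definition has_affine_proj_AND :: "nat \<Rightarrow> (bool list \<Rightarrow> bool) \<Rightarrow> bool" where
  "has_affine_proj_AND r P \<longleftrightarrow>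
     (\<exists>\<pi> :: nat \<Rightarrow> proj_lit. \<forall>x y. (x \<and> y) = P (map (\<lambda>i. eval_proj_lit (\<pi> i) x y) [0..<r]))"

definition csp_instance :: "nat \<Rightarrow> nat \<Rightarrow> nat list list \<Rightarrow> bool" where
  "csp_instance r k cs \<longleftrightarrow> (\<forall>c \<in> set cs. length c = r \<and> (\<forall>v \<in> set c. v < k))"

definition constr_val :: "(bool list \<Rightarrow> bool) \<Rightarrow> nat list list \<Rightarrow> nat \<Rightarrow> (nat \<Rightarrow> bool) \<Rightarrow> real" where
  "constr_val P cs j a = (if P (map a (cs ! j)) then 1 else 0)"

definition is_sparsifier ::
  "(bool list \<Rightarrow> bool) \<Rightarrow> nat list list \<Rightarrow> real \<Rightarrow> nat set \<Rightarrow> (nat \<Rightarrow> real) \<Rightarrow> bool" where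
  "is_sparsifier P cs \<epsilon> T w \<longleftrightarrow>
     T \<subseteq> {..<length cs} \<and> (\<forall>j\<in>T. w j \<ge> 0) \<and>
     (\<forall>a :: nat \<Rightarrow> bool.
        (1 - \<epsilon>) * (\<Sum>j<length cs. constr_val P cs j a) \<le> (\<Sum>j\<in>T. w j * constr_val P cs j a) \<and>
        (\<Sum>j\<in>T. w j * constr_val P cs j a) \<le> (1 + \<epsilon>) * (\<Sum>j<length cs. constr_val P cs j a))"

end

theory Submission
  imports Defs
begin

text \<open>Take n = (k-2) div 4 and four blocks of n variables, read as x_u, \<not>x_u, y_v, \<not>y_v, plus
  two variables fixed to 0 and 1. For each pair (u,v) put the constraint obtained from the
  projection \<pi> by substituting x := x_u, y := y_v. The assignment that is the indicator of
  (u,v) on the x- and y-blocks (and consistent on the negated blocks) satisfies exactly the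
  constraint of (u,v), because P then computes x_u \<and> y_v. Hence a (1 +- \<epsilon>)-sparsifier with
  \<epsilon> < 1 must keep all n^2 \<ge> k^2/576 constraints.\<close>

lemma sparsifier_keeps_isolated_constraints:
  assumes sp: "is_sparsifier P cs \<epsilon> T w" and "\<epsilon> < 1"
    and isolating: "\<And>j. j < length cs \<Longrightarrow>
      \<exists>a. \<forall>i<length cs. constr_val P cs i a = (if i = j then 1 else 0)"
  shows "T = {..<length cs}"
proof
  show T_sub: "T \<subseteq> {..<length cs}"
    using sp by (simp add: is_sparsifier_def)
  show "{..<length cs} \<subseteq> T"
  proof
    fix j assume "j \<in> {..<length cs}"
    then obtain a where a: "\<And>i. i < length cs \<Longrightarrow> constr_val P cs i a = (if i = j then 1 else 0)"
      using isolating by auto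
    have "(\<Sum>i<length cs. constr_val P cs i a) = (\<Sum>i<length cs. if i = j then 1 else 0)"
      using a by (intro sum.cong) auto
    also have "\<dots> = 1"
      using \<open>j \<in> {..<length cs}\<close> by simp
    finally have total: "(\<Sum>i<length cs. constr_val P cs i a) = 1" .
    have kept: "(\<Sum>i\<in>T. w i * constr_val P cs i a) = (\<Sum>i\<in>T. if i = j then w i else 0)"
      using a T_sub by (intro sum.cong) auto
    have "1 - \<epsilon> \<le> (\<Sum>i\<in>T. w i * constr_val P cs i a)"
      using sp total unfolding is_sparsifier_def by (metis mult.right_neutral)
    with \<open>\<epsilon> < 1\<close> have "(\<Sum>i\<in>T. if i = j then w i else 0) \<noteq> 0"
      unfolding kept by linarith
    then show "j \<in> T"
      by (metis (mono_tags, lifting) sum.neutral)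
  qed
qed

definition lit_var :: "nat \<Rightarrow> nat \<times> nat \<Rightarrow> proj_lit \<Rightarrow> nat" where
  "lit_var n p l = (case l of PZero \<Rightarrow> 0 | POne \<Rightarrow> 1 | PX \<Rightarrow> 2 + fst p | PNotX \<Rightarrow> 2 + n + fst p
      | PY \<Rightarrow> 2 + 2*n + snd p | PNotY \<Rightarrow> 2 + 3*n + snd p)"

definition pair_assignment :: "nat \<Rightarrow> nat \<times> nat \<Rightarrow> nat \<Rightarrow> bool" where
  "pair_assignment n p t =
     (if t = 0 then False else if t = 1 then True
      else if t < 2 + n then t = 2 + fst p
      else if t < 2 + 2*n then t \<noteq> 2 + n + fst p
      else if t < 2 + 3*n then t = 2 + 2*n + snd p
      else t \<noteq> 2 + 3*n + snd p)"

lemma pair_assignment_lit_var: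
  assumes "fst p < n" "snd p < n" "fst q < n" "snd q < n"
  shows "pair_assignment n p (lit_var n q l) = eval_proj_lit l (fst q = fst p) (snd q = snd p)"
  using assms by (cases l) (auto simp: pair_assignment_def lit_var_def)

definition and_instance :: "(nat \<Rightarrow> proj_lit) \<Rightarrow> nat \<Rightarrow> nat \<Rightarrow> nat list list" where
  "and_instance \<pi> r n =
     map (\<lambda>p. map (\<lambda>i. lit_var n p (\<pi> i)) [0..<r]) (List.product [0..<n] [0..<n])"

lemma length_and_instance: "length (and_instance \<pi> r n) = n * n"
  by (simp add: and_instance_def)

lemma csp_instance_and_instance:
  assumes "4 * n + 2 \<le> k"
  shows "csp_instance r k (and_instance \<pi> r n)"
  using assms by (auto simp: csp_instance_def and_instance_def lit_var_def split: proj_lit.split)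

lemma constr_val_and_instance:
  assumes \<pi>: "\<And>x y. (x \<and> y) = P (map (\<lambda>i. eval_proj_lit (\<pi> i) x y) [0..<r])"
    and "i < n * n" "j < n * n"
  defines "ps \<equiv> List.product [0..<n] [0..<n]"
  shows "constr_val P (and_instance \<pi> r n) i (pair_assignment n (ps ! j))
    = (if i = j then 1 else 0)"
proof -
  have ps: "length ps = n * n" "distinct ps" "set ps = {0..<n} \<times> {0..<n}"
    by (simp_all add: ps_def distinct_product)
  have pi: "ps ! i \<in> {0..<n} \<times> {0..<n}" and pj: "ps ! j \<in> {0..<n} \<times> {0..<n}"
    using ps assms(2,3) nth_mem by (metis)+
  have "map (pair_assignment n (ps ! j)) (and_instance \<pi> r n ! i)
      = map (\<lambda>l. eval_proj_lit (\<pi> l) (fst (ps ! i) = fst (ps ! j)) (snd (ps ! i) = snd (ps ! j))) [0..<r]"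
    using assms(2) ps(1) pi pj
    by (auto simp: and_instance_def ps_def[symmetric] pair_assignment_lit_var)
  then have "P (map (pair_assignment n (ps ! j)) (and_instance \<pi> r n ! i)) = (ps ! i = ps ! j)"
    using \<pi> by (simp add: prod_eq_iff)
  also have "\<dots> = (i = j)"
    using ps assms(2,3) by (simp add: nth_eq_iff_index_eq)
  finally show ?thesis
    by (simp add: constr_val_def)
qed

lemma square_le_576_square_quarter:
  assumes "6 \<le> k"
  shows "(real k)^2 \<le> 576 * (real ((k - 2) div 4))^2"
proof -
  have "k \<le> 24 * ((k - 2) div 4)"
    using assms by linarith
  then have "real k \<le> 24 * real ((k - 2) div 4)"
    by linarith
  then have "(real k)^2 \<le> (24 * real ((k - 2) div 4))^2"
    by (intro power_mono) auto
  then show ?thesis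
    by (simp add: power_mult_distrib)
qed

theorem lemma7p3:
  fixes r :: nat and P :: "bool list \<Rightarrow> bool"
  assumes "r \<ge> 1" and "has_affine_proj_AND r P"
  shows "\<exists>c::real. c > 0 \<and>
    (\<forall>\<epsilon>::real. \<forall>k::nat. 0 \<le> \<epsilon> \<longrightarrow> \<epsilon> < 1 \<longrightarrow> k \<ge> 4 * r + 2 \<longrightarrow>
      (\<exists>cs. csp_instance r k cs \<and>
        (\<forall>T w. is_sparsifier P cs \<epsilon> T w \<longrightarrow> real (card T) \<ge> c * (real k)^2)))"
proof -
  obtain \<pi> where \<pi>: "\<And>x y. (x \<and> y) = P (map (\<lambda>i. eval_proj_lit (\<pi> i) x y) [0..<r])"
    using assms(2) unfolding has_affine_proj_AND_def by blast
  show ?thesis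
  proof (intro exI[of _ "1/576"] conjI allI impI exI)
    fix \<epsilon> :: real and k :: nat
    assume "\<epsilon> < 1" and k: "4 * r + 2 \<le> k"
    define n where "n = (k - 2) div 4"
    show "csp_instance r k (and_instance \<pi> r n)"
      using k by (intro csp_instance_and_instance) (simp add: n_def)
    fix T w assume sp: "is_sparsifier P (and_instance \<pi> r n) \<epsilon> T w"
    have "T = {..<n * n}"
      using sparsifier_keeps_isolated_constraints[OF sp \<open>\<epsilon> < 1\<close>]
        constr_val_and_instance[OF \<pi>] by (metis length_and_instance)
    moreover have "(real k)^2 \<le> 576 * (real n)^2"
      using k assms(1) unfolding n_def by (intro square_le_576_square_quarter) linarith
    ultimately show "real (card T) \<ge> 1/576 * (real k)^2"
      by (simp add: power2_eq_square)
  qed simp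
qed

end
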